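(* Let $f:[0,1]\to\mathbb{R}$ be a $C^2$ function such that $f'(0)\ge0$, $\inf f''>0$, $f'''$ exists and is bounded on $(0,1)$, and $f'f'''-(f'')^2\le0$ on $(0,1)$. There is a constant $C$ depending only on $f$ such that for all $M\in4\mathbb{N}$ sufficiently large depending on $f$, all $a_0\in[1,2]$ and $\delta_0\in(0,2-a_0]$, the set $F_M$ defined below satisfies $|F_M|\le C\delta_0M^{-2}$.
   Context: Fix $a_0\in[1,2]$, $\delta_0\in(0,2-a_0]$, $M\in4\mathbb{N}$, $m=M/2$, $a_n:=a_0+n\delta_02^{-M}$ for $n=0,\dots,2^M-1$, and $x_j:=2j/M$. Let $T_n:=\{(x,af(x)):x\in[0,1],\ a\in[a_n,a_n+\delta_02^{-M}]\}$. For $j\in\{1,\dots,m-1\}$ and each $n$ of the form $n=2^jk+2^{j-1}$ ($k=0,\dots,2^{M-j}-1$), let $(u_n^{(j)},v_n^{(j)})$ be the solution (with $x_j-u_n^{(j)}\in[0,1]$; it exists and is unique for $M$ large) of $$a_nf(x_j-u)+v=a_{n-2^{j-1}}f(x_j),\qquad a_nf'(x_j-u)=a_{n-2^{j-1}}f'(x_j).$$ For $n=\sum_{i=1}^M\varepsilon_i(n)2^{i-1}$ (binary expansion, $\varepsilon_i(n)\in\{0,1\}$) let $\lfloor n\rfloor_i:=n-(n\bmod2^{i-1})$, and set $u_n:=\sum_{i=1}^{m-1}\varepsilon_i(n)u^{(i)}_{\lfloor n\rfloor_i}$, $v_n:=\sum_{i=1}^{m-1}\varepsilon_i(n)v^{(i)}_{\lfloor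 n\rfloor_i}$ (the total translation of $T_n$ in the cut-and-slide construction, where at step $j$ the union of the already-grouped pieces with bottom curve $a_nf$ is translated so that this bottom curve becomes tangent at $x_j$ to the bottom curve $a_{n-2^{j-1}}f$). Define $$F_M:=\Big(\bigcup_{n=0}^{2^M-1}\big(T_n+(u_n,v_n)\big)\Big)\cap\Big(\Big[\tfrac{4\log_2M}{M},1\Big]\times\mathbb{R}\Big).$$ $|\cdot|$ denotes two-dimensional Lebesgue measure. *)

theory Defs
  imports "HOL-Analysis.Analysis"
begin

definition aseq :: "real \<Rightarrow> real \<Rightarrow> nat \<Rightarrow> nat \<Rightarrow> real" where
  "aseq a0 d0 M n = a0 + real n * d0 / 2 ^ M"

definition xpt :: "nat \<Rightarrow> nat \<Rightarrow> real" where
  "xpt M j = 2 * real j / real M"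

definition Tpiece :: "(real \<Rightarrow> real) \<Rightarrow> real \<Rightarrow> real \<Rightarrow> nat \<Rightarrow> nat \<Rightarrow> (real \<times> real) set" where
  "Tpiece f a0 d0 M n =
     {(x, a * f x) | x a. x \<in> {0..1} \<and> a \<in> {aseq a0 d0 M n .. aseq a0 d0 M n + d0 / 2 ^ M}}"

text \<open>The pair (u_n^(j), v_n^(j)): the unique solution with x_j - u in [0,1] of
  a_n f(x_j - u) + v = a_(n - 2^(j-1)) f(x_j),  a_n f'(x_j - u) = a_(n - 2^(j-1)) f'(x_j).
  Here f1 is the derivative f'.\<close>
definition uvstep :: "(real \<Rightarrow> real) \<Rightarrow> (real \<Rightarrow> real) \<Rightarrow> real \<Rightarrow> real \<Rightarrow> nat \<Rightarrow> nat \<Rightarrow> nat \<Rightarrow> real \<times> real" where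
  "uvstep f f1 a0 d0 M j n =
     (THE p. xpt M j - fst p \<in> {0..1} \<and>
        aseq a0 d0 M n * f (xpt M j - fst p) + snd p = aseq a0 d0 M (n - 2 ^ (j - 1)) * f (xpt M j) \<and>
        aseq a0 d0 M n * f1 (xpt M j - fst p) = aseq a0 d0 M (n - 2 ^ (j - 1)) * f1 (xpt M j))"

definition bdigit :: "nat \<Rightarrow> nat \<Rightarrow> nat" where
  "bdigit i n = (n div 2 ^ (i - 1)) mod 2"

definition btrunc :: "nat \<Rightarrow> nat \<Rightarrow> nat" where
  "btrunc i n = n - n mod 2 ^ (i - 1)"

definition utot :: "(real \<Rightarrow> real) \<Rightarrow> (real \<Rightarrow> real) \<Rightarrow> real \<Rightarrow> real \<Rightarrow> nat \<Rightarrow> nat \<Rightarrow> real" where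
  "utot f f1 a0 d0 M n =
     (\<Sum>i\<in>{1..<M div 2}. real (bdigit i n) * fst (uvstep f f1 a0 d0 M i (btrunc i n)))"

definition vtot :: "(real \<Rightarrow> real) \<Rightarrow> (real \<Rightarrow> real) \<Rightarrow> real \<Rightarrow> real \<Rightarrow> nat \<Rightarrow> nat \<Rightarrow> real" where
  "vtot f f1 a0 d0 M n =
     (\<Sum>i\<in>{1..<M div 2}. real (bdigit i n) * snd (uvstep f f1 a0 d0 M i (btrunc i n)))"

definition FM :: "(real \<Rightarrow> real) \<Rightarrow> (real \<Rightarrow> real) \<Rightarrow> real \<Rightarrow> real \<Rightarrow> nat \<Rightarrow> (real \<times> real) set" where
  "FM f f1 a0 d0 M =
     (\<Union>n\<in>{0..<2 ^ M}. (\<lambda>p. p + (utot f f1 a0 d0 M n, vtot f f1 a0 d0 M n)) ` Tpiece f a0 d0 M n)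
     \<inter> ({4 * log 2 (real M) / real M .. 1} \<times> UNIV)"

end

theory Submission
  imports Defs
begin

(* Fix a strip [x_k, x_(k+1)] with 2^k \<ge> M^2/2, which the cut-off 4 log_2 M / M guarantees,
   and group the pieces into blocks of 2^k' consecutive indices, k' = min (k+1) (m-1). Within a
   block, step i slid the pieces by the lift 2^(i-1) d0 2^-M into tangency at x_i; by
   second-order contact this moves the curves over the strip by O(2^(i-1) d0 2^-M M^-2 (k'-i+1)^2),
   which sums over i \<le> k' to O(2^k' d0 2^-M M^-2). Over a narrow column of the strip each block
   therefore lies in a box of height O(2^k' d0 2^-M M^-2 + d0 2^-M), so, as 2^-k' = O(M^-2), the
   2^(M-k') blocks cover area O(d0 M^-3) in the strip, and the at most M/2 strips give O(d0 M^-2). As F_M is covered by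
   finitely many boxes, its measurability never matters. *)

lemma quadratic_bound_at_double_zero:
  fixes D D1 D2 :: "real \<Rightarrow> real"
  assumes D1: "\<And>t. t \<in> {p..q} \<Longrightarrow> (D has_real_derivative D1 t) (at t within {p..q})"
    and D2: "\<And>t. t \<in> {p..q} \<Longrightarrow> (D1 has_real_derivative D2 t) (at t within {p..q})"
    and K: "\<And>t. t \<in> {p..q} \<Longrightarrow> \<bar>D2 t\<bar> \<le> K"
    and xi: "xi \<in> {p..q}" "D xi = 0" "D1 xi = 0" and Z: "Z \<in> {p..q}"
  shows "\<bar>D Z\<bar> \<le> K * (Z - xi)\<^sup>2"
proof -
  have K0: "0 \<le> K" using K[OF xi(1)] by linarith
  have D1_le: "\<bar>D1 t\<bar> \<le> K * \<bar>t - xi\<bar>" if "t \<in> {p..q}" for t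
    using field_differentiable_bound[of "{p..q}" D1 D2 K t xi] D2 K that xi by auto
  define I where "I = {min Z xi .. max Z xi}"
  have IS: "I \<subseteq> {p..q}" using Z xi by (auto simp: I_def)
  have "\<bar>D Z - D xi\<bar> \<le> (K * \<bar>Z - xi\<bar>) * \<bar>Z - xi\<bar>"
  proof (rule field_differentiable_bound[of I D D1, simplified])
    show "convex I" by (simp add: I_def)
    show "(D has_real_derivative D1 t) (at t within I)" if "t \<in> I" for t
      using D1[of t] that IS by (meson DERIV_subset subsetD)
    show "\<bar>D1 t\<bar> \<le> K * \<bar>Z - xi\<bar>" if "t \<in> I" for t
    proof -
      have "\<bar>t - xi\<bar> \<le> \<bar>Z - xi\<bar>" using that by (auto simp: I_def)
      then have "K * \<bar>t - xi\<bar> \<le> K * \<bar>Z - xi\<bar>" using K0 by (rule mult_left_mono)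
      then show ?thesis using D1_le[of t] that IS by auto
    qed
    show "Z \<in> I" "xi \<in> I" by (auto simp: I_def)
  qed
  then show ?thesis using xi by (simp add: power2_eq_square abs_mult_self mult.assoc)
qed

lemma DERIV_shift_within:
  assumes dg: "\<And>x. x \<in> {0..1} \<Longrightarrow> (g has_real_derivative g' x) (at x within {0..1})"
    and u: "0 \<le> u" and t: "t \<in> {u..1}"
  shows "((\<lambda>t. g (t - u)) has_real_derivative g' (t - u)) (at t within {u..1})"
proof -
  have sub: "(\<lambda>t. t - u) ` {u..1} \<subseteq> {0..1}" using u by auto
  have "(g has_real_derivative g' (t - u)) (at (t - u) within (\<lambda>t. t - u) ` {u..1})"
    using t u by (intro DERIV_subset[OF dg sub]) auto
  moreover have "((\<lambda>t. t - u) has_real_derivative 1) (at t within {u..1})"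
    by (auto intro!: derivative_eq_intros)
  ultimately have "(g \<circ> (\<lambda>t. t - u) has_real_derivative g' (t - u) * 1) (at t within {u..1})"
    by (rule DERIV_image_chain)
  then show ?thesis by (simp add: o_def)
qed

lemma grid_cell_exists:
  fixes X x0 w :: real and N :: nat
  assumes w: "0 < w" and N: "0 < N" and X: "x0 \<le> X" "X \<le> x0 + real N * w"
  obtains s where "s < N" "x0 + real s * w \<le> X" "X \<le> x0 + real (Suc s) * w"
proof
  define t where "t = (X - x0) / w"
  have t: "0 \<le> t" "t \<le> real N" using X w by (auto simp: t_def field_simps)
  define s where "s = min (nat \<lfloor>t\<rfloor>) (N - 1)"
  show "s < N" using N by (simp add: s_def)
  have "s \<le> nat \<lfloor>t\<rfloor>" by (simp add: s_def)
  moreover have "real (nat \<lfloor>t\<rfloor>) \<le> t" using t(1) by simp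
  ultimately have "real s \<le> t" by linarith
  then show "x0 + real s * w \<le> X" using w by (simp add: t_def field_simps)
  have "t \<le> real s + 1"
    using t N by (cases "nat \<lfloor>t\<rfloor> \<le> N - 1") (auto simp: s_def of_nat_diff)
  then show "X \<le> x0 + real (Suc s) * w" using w by (simp add: t_def field_simps)
qed

lemma sum_pow2_weighted_squares:
  "(\<Sum>i\<in>{1..j}. (2::real) ^ (i - 1) * (real j + 1 - real i)\<^sup>2)
     = 6 * 2 ^ j - (real j ^ 2 + 4 * real j + 6)"
proof (induction j)
  case (Suc j)
  have "(\<Sum>i\<in>{1..Suc j}. (2::real) ^ (i - 1) * (real (Suc j) + 1 - real i)\<^sup>2) =
     (real j + 1)\<^sup>2 + (\<Sum>i\<in>{Suc 1..Suc j}. (2::real) ^ (i - 1) * (real (Suc j) + 1 - real i)\<^sup>2)"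
    by (subst sum.atLeast_Suc_atMost) auto
  also have "(\<Sum>i\<in>{Suc 1..Suc j}. (2::real) ^ (i - 1) * (real (Suc j) + 1 - real i)\<^sup>2) =
     (\<Sum>i\<in>{1..j}. (2::real) ^ i * (real j + 1 - real i)\<^sup>2)"
    by (subst sum.shift_bounds_cl_Suc_ivl) (simp add: algebra_simps)
  also have "\<dots> = 2 * (\<Sum>i\<in>{1..j}. (2::real) ^ (i - 1) * (real j + 1 - real i)\<^sup>2)"
    unfolding sum_distrib_left
    by (rule sum.cong) (auto simp: power_Suc[symmetric] simp del: power_Suc)
  finally show ?case using Suc.IH by (simp add: power2_eq_square algebra_simps)
qed simp

lemma double_le_power2: "1 \<le> m \<Longrightarrow> 2 * m \<le> (2::nat) ^ m"
  by (induction m) (auto simp: le_Suc_eq)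

lemma square_le_power2: "4 \<le> m \<Longrightarrow> m ^ 2 \<le> (2::nat) ^ m"
proof (induction m rule: dec_induct)
  case (step m)
  have "4 * m \<le> m * m" using step(1) by (rule mult_le_mono1)
  moreover have "(Suc m)\<^sup>2 = m * m + 2 * m + 1" by (simp add: power2_eq_square)
  ultimately have "(Suc m)\<^sup>2 \<le> m ^ 2 + m ^ 2" using step(1) unfolding power2_eq_square by linarith
  also have "\<dots> \<le> 2 ^ Suc m" using step(3) by simp
  finally show ?case .
qed simp

section \<open>Binary digits\<close>

lemma bdigit_cases: "bdigit i n = 0 \<or> bdigit i n = 1"
  unfolding bdigit_def by auto

lemma btrunc_eq_mult_div: "btrunc i n = 2 ^ (i - 1) * (n div 2 ^ (i - 1))"
  unfolding btrunc_def by (simp add: minus_mod_eq_mult_div)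

lemma btrunc_le: "btrunc i n \<le> n"
  unfolding btrunc_def by simp

lemma btrunc_ge_if_bdigit:
  assumes "bdigit i n = 1"
  shows "2 ^ (i - 1) \<le> btrunc i n"
proof -
  have "n div 2 ^ (i - 1) \<noteq> 0" using assms by (auto simp: bdigit_def)
  then show ?thesis unfolding btrunc_eq_mult_div by simp
qed

lemma bdigit_Suc_low:
  fixes g r j :: nat
  assumes "g mod 2 ^ Suc j = 0" "r < 2 ^ j"
  shows "bdigit (Suc j) (g + r) = 0"
proof -
  obtain q where g: "g = 2 ^ Suc j * q" using assms(1) by (metis mod_0_imp_dvd dvdE)
  have "g + r = r + (2 * q) * 2 ^ j" unfolding g by (simp add: algebra_simps)
  then have "(g + r) div 2 ^ j = 2 * q + r div 2 ^ j" by simp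
  then show ?thesis using assms(2) by (simp add: bdigit_def)
qed

lemma bdigit_Suc_high:
  fixes g r j :: nat
  assumes "g mod 2 ^ Suc j = 0" "r < 2 ^ j"
  shows "bdigit (Suc j) (g + 2 ^ j + r) = 1" "btrunc (Suc j) (g + 2 ^ j + r) = g + 2 ^ j"
proof -
  obtain q where g: "g = 2 ^ Suc j * q" using assms(1) by (metis mod_0_imp_dvd dvdE)
  have e: "g + 2 ^ j + r = r + (2 * q + 1) * 2 ^ j" unfolding g by (simp add: algebra_simps)
  have "(g + 2 ^ j + r) div 2 ^ j = 2 * q + 1 + r div 2 ^ j"
    unfolding e using div_mult_self1[of "2 ^ j" r "2 * q + 1"] by simp
  then show "bdigit (Suc j) (g + 2 ^ j + r) = 1" using assms(2) by (simp add: bdigit_def)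
  have "(g + 2 ^ j + r) mod 2 ^ j = r"
    unfolding e using assms(2) mod_mult_self1[of r "2 * q + 1" "2 ^ j"] by (simp only: mod_less)
  then show "btrunc (Suc j) (g + 2 ^ j + r) = g + 2 ^ j" by (simp add: btrunc_def)
qed

lemma bdigit_trunc_low:
  fixes n k i :: nat
  assumes "1 \<le> i" "i \<le> k"
  shows "bdigit i (n - n mod 2 ^ k) = 0"
proof -
  define q where "q = n div 2 ^ k"
  have g: "n - n mod 2 ^ k = 2 ^ k * q" by (simp add: q_def minus_mod_eq_mult_div)
  have k: "k = (i - 1) + Suc (k - i)" using assms by simp
  have "2 ^ k * q = 2 ^ (i - 1) * (2 * (2 ^ (k - i) * q))"
    by (subst k) (simp add: power_add mult_ac)
  then have "n - n mod 2 ^ k = 2 ^ (i - 1) * (2 * (2 ^ (k - i) * q))" using g by simp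
  then have "(n - n mod 2 ^ k) div 2 ^ (i - 1) = 2 * (2 ^ (k - i) * q)" by simp
  then show ?thesis by (simp add: bdigit_def)
qed

lemma trunc_div_high:
  fixes n k i :: nat
  assumes "k < i"
  shows "(n - n mod 2 ^ k) div 2 ^ (i - 1) = n div 2 ^ (i - 1)"
proof -
  have p: "(2::nat) ^ (i - 1) = 2 ^ k * 2 ^ (i - 1 - k)" using assms by (simp flip: power_add)
  show ?thesis unfolding p by (simp add: minus_mod_eq_mult_div div_mult2_eq)
qed

lemma bdigit_btrunc_trunc_high:
  fixes n k i :: nat
  assumes "k < i"
  shows "bdigit i (n - n mod 2 ^ k) = bdigit i n" "btrunc i (n - n mod 2 ^ k) = btrunc i n"
  using trunc_div_high[OF assms, of n] by (simp_all add: bdigit_def btrunc_eq_mult_div)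

lemma digit_sum_split:
  fixes \<phi> :: "nat \<Rightarrow> nat \<Rightarrow> real"
  assumes "1 \<le> k" "k < m"
  shows "(\<Sum>i\<in>{1..<m}. real (bdigit i n) * \<phi> i (btrunc i n)) =
    (\<Sum>i\<in>{1..k}. real (bdigit i n) * \<phi> i (btrunc i n)) +
    (\<Sum>i\<in>{1..<m}. real (bdigit i (n - n mod 2 ^ k)) * \<phi> i (btrunc i (n - n mod 2 ^ k)))"
proof -
  let ?g = "n - n mod 2 ^ k"
  let ?F = "\<lambda>n i. real (bdigit i n) * \<phi> i (btrunc i n)"
  have split: "sum (?F x) {1..<m} = sum (?F x) {1..<Suc k} + sum (?F x) {Suc k..<m}" for x
    using assms by (intro sum.atLeastLessThan_concat[symmetric]) auto
  have "sum (?F ?g) {1..<Suc k} = 0"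
    by (intro sum.neutral) (auto simp: bdigit_trunc_low)
  moreover have "sum (?F ?g) {Suc k..<m} = sum (?F n) {Suc k..<m}"
    by (intro sum.cong) (auto simp: bdigit_btrunc_trunc_high)
  ultimately show ?thesis using split[of n] split[of ?g] by (simp add: atLeastLessThanSuc_atLeastAtMost)
qed

section \<open>Tangent slides of the profile curve\<close>

locale cut_slide_profile =
  fixes f f1 f2 f3 :: "real \<Rightarrow> real" and c B0 B1 B2 B3 :: real
  assumes d1: "\<And>x. x \<in> {0..1} \<Longrightarrow> (f has_real_derivative f1 x) (at x within {0..1})"
      and d2: "\<And>x. x \<in> {0..1} \<Longrightarrow> (f1 has_real_derivative f2 x) (at x within {0..1})"
      and c2: "continuous_on {0..1} f2"
      and f1_0: "f1 0 \<ge> 0"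
      and c_pos: "c > 0"
      and f2_ge: "\<And>x. x \<in> {0..1} \<Longrightarrow> c \<le> f2 x"
      and d3: "\<And>x. x \<in> {0<..<1} \<Longrightarrow> (f2 has_real_derivative f3 x) (at x)"
      and f3_bound: "\<And>x. x \<in> {0<..<1} \<Longrightarrow> \<bar>f3 x\<bar> \<le> B3"
      and f_bound: "\<And>x. x \<in> {0..1} \<Longrightarrow> \<bar>f x\<bar> \<le> B0"
      and f1_bound: "\<And>x. x \<in> {0..1} \<Longrightarrow> \<bar>f1 x\<bar> \<le> B1"
      and f2_bound: "\<And>x. x \<in> {0..1} \<Longrightarrow> \<bar>f2 x\<bar> \<le> B2"
      and B_nonneg: "0 \<le> B0" "0 \<le> B1" "0 \<le> B2" "0 \<le> B3"
begin

lemma f_lipschitz: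
  assumes "x \<in> {0..1}" "y \<in> {0..1}"
  shows "\<bar>f x - f y\<bar> \<le> B1 * \<bar>x - y\<bar>"
  using field_differentiable_bound[of "{0..1}" f f1 B1 x y] d1 f1_bound assms by auto

lemma f1_increment_ge:
  assumes "0 \<le> s" "s \<le> t" "t \<le> 1"
  shows "c * (t - s) \<le> f1 t - f1 s"
proof -
  have "\<And>x. s \<le> x \<Longrightarrow> x \<le> t \<Longrightarrow> (f1 has_derivative (*) (f2 x)) (at x within {s..t})"
    using assms by (intro has_field_derivative_imp_has_derivative DERIV_subset[OF d2]) auto
  from mvt_very_simple[OF assms(2) this] obtain x where x: "x \<in> {s..t}" "f1 t - f1 s = f2 x * (t - s)"
    by blast
  have "c \<le> f2 x" using x assms by (intro f2_ge) auto
  with x assms show ?thesis by (simp add: mult_right_mono)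
qed

lemma f1_mono:
  assumes "0 \<le> s" "s \<le> t" "t \<le> 1"
  shows "f1 s \<le> f1 t"
proof -
  have "0 \<le> c * (t - s)" using c_pos assms by simp
  then show ?thesis using f1_increment_ge[OF assms] by linarith
qed

lemma f1_strict_mono:
  assumes "0 \<le> s" "s < t" "t \<le> 1"
  shows "f1 s < f1 t"
proof -
  have "0 < c * (t - s)" using c_pos assms by simp
  then show ?thesis using f1_increment_ge[of s t] assms by linarith
qed

lemma f1_eq_iff:
  assumes "s \<in> {0..1}" "t \<in> {0..1}"
  shows "f1 s = f1 t \<longleftrightarrow> s = t"
  using f1_strict_mono[of s t] f1_strict_mono[of t s] assms
  by (metis atLeastAtMost_iff less_irrefl linorder_neq_iff)

lemma f1_continuous: "continuous_on {0..1} f1"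
  unfolding continuous_on_eq_continuous_within using DERIV_continuous[OF d2] by blast

lemma f2_lipschitz:
  assumes "0 \<le> s" "s \<le> t" "t \<le> 1"
  shows "\<bar>f2 t - f2 s\<bar> \<le> B3 * (t - s)"
proof (cases "s = t")
  case False
  then have st: "s < t" using assms by simp
  have "continuous_on {s..t} f2" using c2 by (rule continuous_on_subset) (use assms in auto)
  moreover have "f2 differentiable at x" if "s < x" "x < t" for x
    using d3[of x] that assms by (metis differentiableI greaterThanLessThan_iff
        has_field_derivative_imp_has_derivative le_less_trans less_le_trans)
  ultimately obtain l z where z: "s < z" "z < t" "(f2 has_real_derivative l) (at z)"
      "f2 t - f2 s = (t - s) * l"
    using MVT[OF st] by blast
  have "l = f3 z" using z assms d3[of z] by (auto intro: DERIV_unique)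
  then have "\<bar>l\<bar> \<le> B3" using f3_bound[of z] z assms by auto
  then show ?thesis using z st by (simp add: abs_mult mult.commute mult_left_mono)
qed simp

definition contact_const :: real where "contact_const = B2 + 2 * B3 * B1 / c"

lemma contact_const_nonneg: "0 \<le> contact_const"
  unfolding contact_const_def using B_nonneg c_pos by simp

definition contact_dist_const :: real where "contact_dist_const = 2 + B1 / c"

definition area_const :: real where
  "area_const = 4 * B0 + 12 * contact_const * contact_dist_const\<^sup>2 + 1"

lemma area_const_pos: "0 < area_const"
  unfolding area_const_def using B_nonneg contact_const_nonneg by (simp add: add_nonneg_pos)

lemma slide_f2_gap_le:
  assumes t: "0 \<le> t - u" "t \<le> 1" and u: "0 \<le> u" "u \<le> (a - a') * B1 / c"
    and a: "0 \<le> a'" "a' \<le> a" "a' \<le> 2"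
  shows "\<bar>a * f2 (t - u) - a' * f2 t\<bar> \<le> (a - a') * contact_const"
proof -
  have "\<bar>a * f2 (t - u) - a' * f2 t\<bar> = \<bar>(a - a') * f2 (t - u) - a' * (f2 t - f2 (t - u))\<bar>"
    by (simp add: algebra_simps)
  also have "\<dots> \<le> \<bar>(a - a') * f2 (t - u)\<bar> + \<bar>a' * (f2 t - f2 (t - u))\<bar>"
    by (rule abs_triangle_ineq4)
  also have "\<dots> = (a - a') * \<bar>f2 (t - u)\<bar> + a' * \<bar>f2 t - f2 (t - u)\<bar>"
    using a by (simp add: abs_mult)
  also have "\<dots> \<le> (a - a') * B2 + 2 * (B3 * u)"
    using f2_bound[of "t - u"] f2_lipschitz[of "t - u" t] t u a
    by (intro add_mono mult_mono mult_left_mono) auto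
  also have "\<dots> \<le> (a - a') * B2 + 2 * (B3 * ((a - a') * B1 / c))"
    using u B_nonneg by (intro add_left_mono mult_left_mono) auto
  also have "\<dots> = (a - a') * contact_const" unfolding contact_const_def by (simp add: algebra_simps)
  finally show ?thesis .
qed

text \<open>The gap vanishes to second order at the tangency point xi, and its second derivative
  is O(a - a').\<close>
lemma tangent_slide_deviation:
  assumes u: "0 \<le> u" "u \<le> xi" "u \<le> (a - a') * B1 / c" and xi: "xi \<le> 1"
    and a: "0 \<le> a'" "a' \<le> a" "a' \<le> 2"
    and tangent: "a * f (xi - u) + v = a' * f xi" "a * f1 (xi - u) = a' * f1 xi"
    and Z: "u \<le> Z" "Z \<le> 1"
  shows "\<bar>a * f (Z - u) + v - a' * f Z\<bar> \<le> (a - a') * contact_const * (Z - xi)\<^sup>2"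
proof (rule quadratic_bound_at_double_zero[where p = u and q = 1])
  fix t assume t: "t \<in> {u..1}"
  have "{u..1} \<subseteq> {0..1}" using u by auto
  then have "(f has_real_derivative f1 t) (at t within {u..1})"
    "(f1 has_real_derivative f2 t) (at t within {u..1})"
    using t by (auto intro: DERIV_subset[OF d1] DERIV_subset[OF d2])
  with DERIV_shift_within[OF d1 u(1) t] DERIV_shift_within[OF d2 u(1) t]
  show "((\<lambda>Z. a * f (Z - u) + v - a' * f Z) has_real_derivative a * f1 (t - u) - a' * f1 t)
          (at t within {u..1})"
    and "((\<lambda>t. a * f1 (t - u) - a' * f1 t) has_real_derivative a * f2 (t - u) - a' * f2 t)
          (at t within {u..1})"
    by (auto intro!: derivative_eq_intros)
  show "\<bar>a * f2 (t - u) - a' * f2 t\<bar> \<le> (a - a') * contact_const"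
    using t u a by (intro slide_f2_gap_le) auto
qed (use u xi Z tangent in auto)

lemma tangent_point_exists:
  assumes xi: "0 < xi" "xi \<le> 1" and a: "1 \<le> a'" "a' \<le> a" "(a - a') * B1 \<le> c * xi"
  obtains t where "0 \<le> t" "t \<le> xi" "a * f1 t = a' * f1 xi"
proof -
  have f1_xi: "c * xi \<le> f1 xi - f1 0" using f1_increment_ge[of 0 xi] xi by simp
  have "0 \<le> c * xi" using c_pos xi by simp
  then have "0 \<le> f1 xi" using f1_xi f1_0 by linarith
  then have "a' * f1 xi \<le> a * f1 xi" using a by (simp add: mult_right_mono)
  then have hi: "a' * f1 xi / a \<le> f1 xi" using a by (simp add: divide_le_eq mult.commute)
  have "a * f1 0 \<le> a' * f1 xi"
  proof -
    have "a' * f1 xi - a * f1 0 = a' * (f1 xi - f1 0) - (a - a') * f1 0" by algebra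
    moreover have "f1 xi - f1 0 \<le> a' * (f1 xi - f1 0)"
      using mult_right_mono[OF a(1), of "f1 xi - f1 0"] f1_mono[of 0 xi] xi by simp
    moreover have "(a - a') * f1 0 \<le> (a - a') * B1" using a f1_bound[of 0] by (simp add: mult_left_mono)
    ultimately show ?thesis using f1_xi a by linarith
  qed
  then have lo: "f1 0 \<le> a' * f1 xi / a" using a by (simp add: le_divide_eq mult.commute)
  have "continuous_on {0..xi} f1"
    using f1_continuous by (rule continuous_on_subset) (use xi in auto)
  from IVT'[of f1 0 "a' * f1 xi / a" xi, OF lo hi _ this] xi a
  obtain t where "0 \<le> t" "t \<le> xi" "f1 t = a' * f1 xi / a" by auto
  then show ?thesis using a by (intro that) (auto simp: field_simps)
qed

lemma tangent_slide_solution: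
  assumes xi: "0 < xi" "xi \<le> 1" and a: "1 \<le> a'" "a' \<le> a" "(a - a') * B1 \<le> c * xi"
    and p: "p = (THE p. xi - fst p \<in> {0..1} \<and> a * f (xi - fst p) + snd p = a' * f xi \<and>
                        a * f1 (xi - fst p) = a' * f1 xi)"
  shows "a * f (xi - fst p) + snd p = a' * f xi" "a * f1 (xi - fst p) = a' * f1 xi"
    "0 \<le> fst p" "fst p \<le> xi" "fst p \<le> (a - a') * B1 / c"
proof -
  obtain t where t: "0 \<le> t" "t \<le> xi" "a * f1 t = a' * f1 xi"
    using tangent_point_exists[OF xi a] .
  have p_eq: "p = (xi - t, a' * f xi - a * f t)"
    unfolding p
  proof (rule the_equality)
    fix q assume q: "xi - fst q \<in> {0..1} \<and> a * f (xi - fst q) + snd q = a' * f xi \<and>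
                        a * f1 (xi - fst q) = a' * f1 xi"
    then have "a * f1 (xi - fst q) = a * f1 t" using t by simp
    then have "f1 (xi - fst q) = f1 t" using a by simp
    then have "xi - fst q = t" using q t xi by (subst (asm) f1_eq_iff) auto
    then show "q = (xi - t, a' * f xi - a * f t)" using q by (auto simp: prod_eq_iff)
  qed (use t xi in auto)
  then show "a * f (xi - fst p) + snd p = a' * f xi" "a * f1 (xi - fst p) = a' * f1 xi"
    "0 \<le> fst p" "fst p \<le> xi"
    using t by auto
  have "f1 xi - f1 t \<le> a * (f1 xi - f1 t)"
    using a f1_mono[of t xi] t xi by (simp add: mult_le_cancel_right1)
  also have "\<dots> = (a - a') * f1 xi" using t by (simp add: algebra_simps)
  also have "\<dots> \<le> (a - a') * B1" using a f1_bound[of xi] xi by (intro mult_left_mono) auto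
  finally have "c * (xi - t) \<le> (a - a') * B1"
    using f1_increment_ge[of t xi] t xi by linarith
  then show "fst p \<le> (a - a') * B1 / c"
    using p_eq c_pos by (simp add: le_divide_eq mult.commute)
qed

end

section \<open>The cut-and-slide construction\<close>

locale cut_slide = cut_slide_profile +
  fixes M :: nat and a0 d0 :: real
  assumes M_dvd: "4 dvd M" and M_ge: "8 \<le> M"
    and a0_ge: "1 \<le> a0" and d0_pos: "0 < d0" and a0_d0: "a0 + d0 \<le> 2"
    and M_large: "B1 * real M \<le> 2 * c * 2 ^ (M div 2)"
begin

abbreviation "m \<equiv> M div 2"
abbreviation "h \<equiv> d0 / 2 ^ M"
abbreviation "A \<equiv> aseq a0 d0 M"
abbreviation "xx \<equiv> xpt M"
abbreviation "uv \<equiv> uvstep f f1 a0 d0 M"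

lemma M_eq: "M = 2 * m" using M_dvd by auto

lemma real_M_eq: "real M = 2 * real m"
  using M_eq by (metis of_nat_mult of_nat_numeral)

lemma m_ge: "4 \<le> m" using M_ge by simp

lemma M_pos: "0 < real M" using M_ge by simp

lemma power_M: "(2::real) ^ M = 2 ^ m * 2 ^ m"
  by (subst M_eq) (simp add: power_add mult_2)

lemma d0_le_1: "d0 \<le> 1" using a0_ge a0_d0 by simp

lemma h_pos: "0 < h" using d0_pos by simp

lemma aseq_eq: "A n = a0 + real n * h" by (simp add: aseq_def)

lemma aseq_bounds:
  assumes "n < 2 ^ M"
  shows "1 \<le> A n" "A n + h \<le> 2"
proof -
  have "real n + 1 \<le> 2 ^ M" using assms
    by (metis Suc_eq_plus1 Suc_leI of_nat_1 of_nat_add of_nat_le_iff of_nat_numeral of_nat_power)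
  then have "(real n + 1) * h \<le> 2 ^ M * h" using h_pos by (intro mult_right_mono) auto
  moreover have "real n * h + h = (real n + 1) * h" by algebra
  ultimately have "real n * h + h \<le> d0" by simp
  then show "A n + h \<le> 2" using a0_d0 by (simp add: aseq_eq)
  have "0 \<le> real n * h" using d0_pos by simp
  then show "1 \<le> A n" using a0_ge by (simp add: aseq_eq)
qed

lemma aseq_diff: "k \<le> n \<Longrightarrow> A (n - k) = A n - real k * h"
  by (simp add: aseq_eq of_nat_diff algebra_simps diff_divide_distrib)

lemma xpt_eq: "xx j = 2 * real j / real M" by (simp add: xpt_def)

lemma xpt_bounds:
  assumes "1 \<le> j" "j < m"
  shows "2 / real M \<le> xx j" "xx j < 1"
proof -
  have "2 * real j < real M" using assms real_M_eq by simp
  then show "xx j < 1" by (simp add: xpt_eq)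
  show "2 / real M \<le> xx j" using assms M_ge by (simp add: xpt_eq divide_right_mono)
qed

text \<open>This is where M_large enters: the slide at step j lifts by 2^(j-1) h \<le> 2^-m, which is
  small enough for the tangent point of step j to exist.\<close>
lemma slide_increment_le:
  assumes "j < m"
  shows "2 ^ (j - 1) * h * B1 \<le> c * (2 / real M)"
proof -
  have "(2::real) ^ (j - 1) \<le> 2 ^ m" by (rule power_increasing) (use assms in auto)
  then have "2 ^ (j - 1) * d0 \<le> 2 ^ m * 1" using d0_le_1 d0_pos by (intro mult_mono) auto
  then have "2 ^ (j - 1) * h \<le> 2 ^ m * 1 / 2 ^ M" by (simp add: divide_right_mono)
  then have "2 ^ (j - 1) * h \<le> 1 / 2 ^ m" by (simp add: power_M)
  then have "2 ^ (j - 1) * h * B1 \<le> B1 / 2 ^ m"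
    using mult_right_mono[OF _ B_nonneg(2)] by fastforce
  also have "\<dots> \<le> c * (2 / real M)" using M_large M_ge by (simp add: field_simps)
  finally show ?thesis .
qed

lemma uvstep_tangency:
  assumes j: "1 \<le> j" "j < m" and b: "2 ^ (j - 1) \<le> b" "b < 2 ^ M"
  defines "u \<equiv> fst (uv j b)" and "v \<equiv> snd (uv j b)"
  shows "A b * f (xx j - u) + v = A (b - 2 ^ (j - 1)) * f (xx j)"
    "A b * f1 (xx j - u) = A (b - 2 ^ (j - 1)) * f1 (xx j)"
    "0 \<le> u" "u \<le> xx j" "u \<le> 2 ^ (j - 1) * h * B1 / c"
proof -
  have diff: "A b - A (b - 2 ^ (j - 1)) = 2 ^ (j - 1) * h" using aseq_diff[OF b(1)] by simp
  have a': "1 \<le> A (b - 2 ^ (j - 1))" using aseq_bounds(1)[of "b - 2 ^ (j - 1)"] b by simp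
  have "0 \<le> 2 ^ (j - 1) * h" using d0_pos by simp
  then have a: "A (b - 2 ^ (j - 1)) \<le> A b" using diff by linarith
  have small: "(A b - A (b - 2 ^ (j - 1))) * B1 \<le> c * xx j"
  proof -
    have "c * (2 / real M) \<le> c * xx j" using xpt_bounds[OF j] c_pos by (intro mult_left_mono) auto
    then show ?thesis unfolding diff using slide_increment_le[OF j(2)] by linarith
  qed
  have "0 < 2 / real M" using M_ge by simp
  then have xi: "0 < xx j" "xx j \<le> 1" using xpt_bounds[OF j] by linarith+
  note T = tangent_slide_solution[OF xi a' a small uvstep_def, folded u_def v_def, unfolded diff]
  show "A b * f (xx j - u) + v = A (b - 2 ^ (j - 1)) * f (xx j)"
    "A b * f1 (xx j - u) = A (b - 2 ^ (j - 1)) * f1 (xx j)"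
    "0 \<le> u" "u \<le> xx j" "u \<le> 2 ^ (j - 1) * h * B1 / c"
    using T by simp_all
qed

definition utot_upto :: "nat \<Rightarrow> nat \<Rightarrow> real" where
  "utot_upto j n = (\<Sum>i\<in>{1..j}. real (bdigit i n) * fst (uv i (btrunc i n)))"

definition vtot_upto :: "nat \<Rightarrow> nat \<Rightarrow> real" where
  "vtot_upto j n = (\<Sum>i\<in>{1..j}. real (bdigit i n) * snd (uv i (btrunc i n)))"

lemma utot_upto_Suc:
  "utot_upto (Suc j) n = utot_upto j n + real (bdigit (Suc j) n) * fst (uv (Suc j) (btrunc (Suc j) n))"
  unfolding utot_upto_def by (simp add: sum.cl_ivl_Suc)

lemma vtot_upto_Suc:
  "vtot_upto (Suc j) n = vtot_upto j n + real (bdigit (Suc j) n) * snd (uv (Suc j) (btrunc (Suc j) n))"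
  unfolding vtot_upto_def by (simp add: sum.cl_ivl_Suc)

lemma uv_term_bounds:
  assumes "1 \<le> i" "i < m" "n < 2 ^ M"
  shows "0 \<le> real (bdigit i n) * fst (uv i (btrunc i n))"
    "real (bdigit i n) * fst (uv i (btrunc i n)) \<le> 2 ^ (i - 1) * h * B1 / c"
proof -
  have "0 \<le> 2 ^ (i - 1) * h * B1 / c" using B_nonneg c_pos d0_pos by simp
  moreover have "2 ^ (i - 1) \<le> btrunc i n" "btrunc i n < 2 ^ M" if "bdigit i n = 1"
    using btrunc_ge_if_bdigit[OF that] btrunc_le[of i n] assms(3) by auto
  ultimately show "0 \<le> real (bdigit i n) * fst (uv i (btrunc i n))"
    "real (bdigit i n) * fst (uv i (btrunc i n)) \<le> 2 ^ (i - 1) * h * B1 / c"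
    using bdigit_cases[of i n] uvstep_tangency(3,5)[OF assms(1,2)] by auto
qed

lemma utot_upto_nonneg: "j < m \<Longrightarrow> n < 2 ^ M \<Longrightarrow> 0 \<le> utot_upto j n"
  unfolding utot_upto_def using uv_term_bounds(1) by (intro sum_nonneg) auto

text \<open>Error bound for the contact made at step i, seen at abscissa Y, when the curve is
  afterwards shifted horizontally by at most e.\<close>
definition contact_err :: "real \<Rightarrow> real \<Rightarrow> nat \<Rightarrow> real" where
  "contact_err Y e i = contact_const * (2 ^ (i - 1) * h) * (\<bar>Y - xx i\<bar> + e)\<^sup>2"

lemma contact_err_nonneg: "0 \<le> contact_err Y e i"
  unfolding contact_err_def using contact_const_nonneg d0_pos by simp

lemma contact_err_shift_le:
  assumes "0 \<le> u" "u \<le> e"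
  shows "contact_err (Y - u) (e - u) i \<le> contact_err Y e i"
proof -
  have "(\<bar>Y - u - xx i\<bar> + (e - u))\<^sup>2 \<le> (\<bar>Y - xx i\<bar> + e)\<^sup>2"
    using assms by (intro power_mono) auto
  then show ?thesis
    unfolding contact_err_def using contact_const_nonneg d0_pos by (intro mult_left_mono) auto
qed

lemma slide_step_deviation:
  assumes j: "Suc j < m" and g: "g + 2 ^ j < 2 ^ M"
    and Y: "fst (uv (Suc j) (g + 2 ^ j)) \<le> Y" "Y \<le> 1" and e: "0 \<le> e"
  shows "\<bar>A (g + 2 ^ j) * f (Y - fst (uv (Suc j) (g + 2 ^ j))) + snd (uv (Suc j) (g + 2 ^ j))
           - A g * f Y\<bar> \<le> contact_err Y e (Suc j)"
proof -
  note uv = uvstep_tangency[of "Suc j" "g + 2 ^ j", OF _ j _ g, simplified]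
  have diff: "A (g + 2 ^ j) - A g = 2 ^ j * h" using aseq_diff[of "2 ^ j" "g + 2 ^ j"] by simp
  have "A g \<le> 2" using aseq_bounds[of g] g h_pos by simp
  moreover have "0 \<le> 2 ^ j * h" using d0_pos by simp
  moreover have "1 \<le> A g" using aseq_bounds[of g] g by simp
  ultimately have "\<bar>A (g + 2 ^ j) * f (Y - fst (uv (Suc j) (g + 2 ^ j))) + snd (uv (Suc j) (g + 2 ^ j))
           - A g * f Y\<bar> \<le> (A (g + 2 ^ j) - A g) * contact_const * (Y - xx (Suc j))\<^sup>2"
    using uv diff xpt_bounds[of "Suc j"] j Y by (intro tangent_slide_deviation) auto
  also have "\<dots> \<le> contact_err Y e (Suc j)"
  proof -
    have "(Y - xx (Suc j))\<^sup>2 \<le> (\<bar>Y - xx (Suc j)\<bar> + e)\<^sup>2"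
      using e by (metis abs_ge_zero le_add_same_cancel1 power2_abs power_mono)
    moreover have "0 \<le> contact_const * (2 ^ j * h)" using contact_const_nonneg d0_pos by simp
    ultimately have "contact_const * (2 ^ j * h) * (Y - xx (Suc j))\<^sup>2 \<le> contact_err Y e (Suc j)"
      unfolding contact_err_def diff_Suc_1 by (rule mult_left_mono)
    then show ?thesis unfolding diff by (simp add: mult_ac)
  qed
  finally show ?thesis .
qed

lemma utot_vtot_upto_Suc_low:
  assumes "g mod 2 ^ Suc j = 0" "r < 2 ^ j"
  shows "utot_upto (Suc j) (g + r) = utot_upto j (g + r)" "vtot_upto (Suc j) (g + r) = vtot_upto j (g + r)"
  using bdigit_Suc_low[OF assms] by (simp_all add: utot_upto_Suc vtot_upto_Suc)

lemma utot_vtot_upto_Suc_high: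
  assumes "g mod 2 ^ Suc j = 0" "r < 2 ^ j"
  shows "utot_upto (Suc j) (g + 2 ^ j + r) = utot_upto j (g + 2 ^ j + r) + fst (uv (Suc j) (g + 2 ^ j))"
    "vtot_upto (Suc j) (g + 2 ^ j + r) = vtot_upto j (g + 2 ^ j + r) + snd (uv (Suc j) (g + 2 ^ j))"
  using bdigit_Suc_high[OF assms] by (simp_all add: utot_upto_Suc vtot_upto_Suc)

text \<open>Induction on j: the digit j of r decides whether step j slid the piece g + r onto the
  tangent of the piece g, or left it in place.\<close>
lemma utot_upto_deviation:
  assumes "j < m" "g mod 2 ^ j = 0" "r < 2 ^ j" "g + r < 2 ^ M" "Y \<le> 1"
    "utot_upto j (g + r) \<le> Y" "utot_upto j (g + r) \<le> e"
  shows "\<bar>A (g + r) * f (Y - utot_upto j (g + r)) + vtot_upto j (g + r) - A g * f Y\<bar>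
           \<le> (\<Sum>i\<in>{1..j}. contact_err Y e i)"
  using assms
proof (induction j arbitrary: g r Y e)
  case 0
  then show ?case by (simp add: utot_upto_def vtot_upto_def)
next
  case (Suc j)
  have jm: "j < m" using Suc.prems(1) by simp
  have "2 ^ Suc j dvd g" using Suc.prems(2) by (rule mod_0_imp_dvd)
  then have "2 ^ j dvd g" by (rule power_le_dvd) simp
  then have g_mod: "g mod 2 ^ j = 0" "(g + 2 ^ j) mod 2 ^ j = 0" by auto
  have sum_Suc: "(\<Sum>i\<in>{1..Suc j}. contact_err Y e i)
      = (\<Sum>i\<in>{1..j}. contact_err Y e i) + contact_err Y e (Suc j)"
    by (simp add: sum.cl_ivl_Suc)
  show ?case
  proof (cases "r < 2 ^ j")
    case True
    note U = utot_vtot_upto_Suc_low[OF Suc.prems(2) True]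
    have "\<bar>A (g + r) * f (Y - utot_upto j (g + r)) + vtot_upto j (g + r) - A g * f Y\<bar>
            \<le> (\<Sum>i\<in>{1..j}. contact_err Y e i)"
      using Suc.IH[OF jm g_mod(1) True Suc.prems(4,5)] Suc.prems(6,7) unfolding U by blast
    then show ?thesis unfolding sum_Suc U using contact_err_nonneg[of Y e "Suc j"] by linarith
  next
    case False
    define r' where "r' = r - 2 ^ j"
    define u where "u = fst (uv (Suc j) (g + 2 ^ j))"
    define v where "v = snd (uv (Suc j) (g + 2 ^ j))"
    have r': "r' < 2 ^ j" "g + r = g + 2 ^ j + r'" using Suc.prems(3) False by (auto simp: r'_def)
    note U = utot_vtot_upto_Suc_high[OF Suc.prems(2) r'(1), folded r'(2) u_def v_def]
    have gM: "g + 2 ^ j < 2 ^ M" using Suc.prems(4) r'(2) by linarith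
    have u0: "0 \<le> u" using uvstep_tangency(3)[of "Suc j" "g + 2 ^ j"] Suc.prems(1) gM by (simp add: u_def)
    have U0: "0 \<le> utot_upto j (g + r)" using utot_upto_nonneg[OF jm Suc.prems(4)] .
    let ?D_IH = "A (g + r) * f (Y - u - utot_upto j (g + r)) + vtot_upto j (g + r) - A (g + 2 ^ j) * f (Y - u)"
    let ?D_step = "A (g + 2 ^ j) * f (Y - u) + v - A g * f Y"
    have "\<bar>?D_IH\<bar> \<le> (\<Sum>i\<in>{1..j}. contact_err (Y - u) (e - u) i)"
      using Suc.IH[OF jm g_mod(2) r'(1), of "Y - u" "e - u"] Suc.prems(4-7) U u0
      unfolding r'(2)[symmetric] by simp
    also have "\<dots> \<le> (\<Sum>i\<in>{1..j}. contact_err Y e i)"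
      using contact_err_shift_le u0 U0 U Suc.prems(7) by (intro sum_mono) simp
    finally have IH: "\<bar>?D_IH\<bar> \<le> (\<Sum>i\<in>{1..j}. contact_err Y e i)" .
    have step: "\<bar>?D_step\<bar> \<le> contact_err Y e (Suc j)"
      using slide_step_deviation[OF Suc.prems(1) gM] Suc.prems(5-7) U U0 u0 by (simp add: u_def v_def)
    have "A (g + r) * f (Y - utot_upto (Suc j) (g + r)) + vtot_upto (Suc j) (g + r) - A g * f Y
            = ?D_IH + ?D_step"
      unfolding U by (simp add: algebra_simps)
    then show ?thesis unfolding sum_Suc using IH step abs_triangle_ineq[of ?D_IH ?D_step] by linarith
  qed
qed

abbreviation "ut \<equiv> utot f f1 a0 d0 M"
abbreviation "vt \<equiv> vtot f f1 a0 d0 M"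

lemma utot_vtot_split:
  assumes "1 \<le> k" "k < m"
  shows "ut n = utot_upto k n + ut (n - n mod 2 ^ k)" "vt n = vtot_upto k n + vt (n - n mod 2 ^ k)"
  unfolding utot_def vtot_def utot_upto_def vtot_upto_def by (rule digit_sum_split[OF assms])+

lemma utot_nonneg: "n < 2 ^ M \<Longrightarrow> 0 \<le> ut n"
  unfolding utot_def using uv_term_bounds(1) by (intro sum_nonneg) auto

lemma utot_le:
  assumes "n < 2 ^ M"
  shows "ut n \<le> B1 / (c * real M)"
proof -
  have geometric: "(\<Sum>i\<in>{1..j}. (2::real) ^ (i - 1)) = 2 ^ j - 1" for j
    by (induction j) (simp_all add: sum.cl_ivl_Suc)
  have "ut n \<le> (\<Sum>i\<in>{1..<m}. 2 ^ (i - 1) * h * B1 / c)"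
    unfolding utot_def using assms uv_term_bounds(2) by (intro sum_mono) auto
  also have "\<dots> = (h * B1 / c) * (\<Sum>i\<in>{1..m - 1}. (2::real) ^ (i - 1))"
  proof -
    have "{1..<m} = {1..m - 1}" using m_ge by auto
    then show ?thesis by (simp add: sum_distrib_left mult_ac)
  qed
  also have "\<dots> = (h * B1 / c) * (2 ^ (m - 1) - 1)" by (simp only: geometric)
  also have "\<dots> \<le> (h * B1 / c) * 2 ^ m"
  proof (rule mult_left_mono)
    have "(2::real) ^ (m - 1) \<le> 2 ^ m" by (rule power_increasing) auto
    then show "(2::real) ^ (m - 1) - 1 \<le> 2 ^ m" by linarith
    show "0 \<le> h * B1 / c" using d0_pos B_nonneg c_pos by simp
  qed
  also have "\<dots> = d0 * B1 / (c * 2 ^ m)" using c_pos by (simp add: power_M field_simps)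
  also have "\<dots> \<le> 1 * B1 / (c * real M)"
  proof (rule frac_le)
    show "0 \<le> 1 * B1" using B_nonneg by simp
    show "d0 * B1 \<le> 1 * B1" using d0_le_1 B_nonneg by (intro mult_right_mono)
    show "0 < c * real M" using c_pos M_ge by simp
    have "2 * m \<le> (2::nat) ^ m" by (rule double_le_power2) (use m_ge in auto)
    then have "real M \<le> 2 ^ m" using M_eq by (metis of_nat_le_iff of_nat_numeral of_nat_power)
    then show "c * real M \<le> c * 2 ^ m" using c_pos by simp
  qed
  finally show ?thesis by simp
qed

text \<open>The translations of n and g differ only in the first k' steps.\<close>
lemma piece_deviation:
  assumes n: "n < 2 ^ M" and k': "1 \<le> k'" "k' < m" and x: "0 \<le> x" "x \<le> 1"
    and a: "A n \<le> a" "a \<le> A n + h" and x_ut: "x + ut n \<le> 1"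
  defines "g \<equiv> n - n mod 2 ^ k'"
  shows "0 \<le> x + ut n - ut g" "x + ut n - ut g \<le> 1"
    "\<bar>a * f x + vt n - (A g * f (x + ut n - ut g) + vt g)\<bar>
       \<le> h * B0 + (\<Sum>i\<in>{1..k'}. contact_err (x + ut n - ut g) (utot_upto k' n) i)"
proof -
  have gM: "g < 2 ^ M" using n by (simp add: g_def)
  have split: "ut n = utot_upto k' n + ut g" "vt n = vtot_upto k' n + vt g"
    unfolding g_def by (rule utot_vtot_split[OF k'])+
  have U0: "0 \<le> utot_upto k' n" using utot_upto_nonneg[OF k'(2) n] .
  have ug: "0 \<le> ut g" using utot_nonneg[OF gM] .
  define Y where "Y = x + ut n - ut g"
  have Y: "Y = x + utot_upto k' n" using split by (simp add: Y_def)
  show "0 \<le> x + ut n - ut g" using Y x U0 by (simp add: Y_def)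
  show "x + ut n - ut g \<le> 1" using x_ut ug by simp
  have gn: "g + n mod 2 ^ k' = n" by (simp add: g_def)
  have "Y \<le> 1" using x_ut ug by (simp add: Y_def)
  then have "\<bar>A n * f x + vtot_upto k' n - A g * f Y\<bar>
      \<le> (\<Sum>i\<in>{1..k'}. contact_err Y (utot_upto k' n) i)"
    using utot_upto_deviation[OF k'(2), of g "n mod 2 ^ k'" Y "utot_upto k' n"] x n
    unfolding gn by (simp add: Y Y_def g_def minus_mod_eq_mult_div)
  moreover have "\<bar>(a - A n) * f x\<bar> \<le> h * B0"
    unfolding abs_mult using a f_bound[of x] x by (intro mult_mono) auto
  moreover have "a * f x + vt n - (A g * f Y + vt g) = (a - A n) * f x + (A n * f x + vtot_upto k' n - A g * f Y)"
    using split by (simp add: algebra_simps)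
  ultimately show "\<bar>a * f x + vt n - (A g * f (x + ut n - ut g) + vt g)\<bar>
       \<le> h * B0 + (\<Sum>i\<in>{1..k'}. contact_err (x + ut n - ut g) (utot_upto k' n) i)"
    using abs_triangle_ineq[of "(a - A n) * f x" "A n * f x + vtot_upto k' n - A g * f Y"]
    unfolding Y_def[symmetric] by linarith
qed

lemma contact_err_le:
  assumes k: "k \<le> k'" "k' \<le> Suc k" and i: "i \<in> {1..k'}" and X: "xx k \<le> X" "X \<le> xx (Suc k)"
    and e: "0 \<le> e" and Y: "\<bar>Y - X\<bar> + e \<le> B1 / (c * real M)"
  shows "contact_err Y e i
           \<le> contact_const * h * contact_dist_const\<^sup>2 / (real M)\<^sup>2
              * (2 ^ (i - 1) * (real k' + 1 - real i)\<^sup>2)"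
proof -
  have "X - xx i \<le> 2 * (real (Suc k) - real i) / real M"
    using X by (simp add: xpt_eq diff_divide_distrib)
  also have "\<dots> \<le> 2 * (real k' + 1 - real i) / real M"
    using k M_pos by (intro divide_right_mono) auto
  finally have "X - xx i \<le> 2 * (real k' + 1 - real i) / real M" .
  moreover have "xx i - X \<le> 2 * (real i - real k) / real M"
    using X by (simp add: xpt_eq diff_divide_distrib)
  moreover have "\<dots> \<le> 2 * (real k' + 1 - real i) / real M"
    using k M_pos i by (intro divide_right_mono) auto
  ultimately have "\<bar>X - xx i\<bar> \<le> 2 * (real k' + 1 - real i) / real M" by linarith
  then have "\<bar>Y - xx i\<bar> + e \<le> 2 * (real k' + 1 - real i) / real M + B1 / (c * real M)"
    using Y by linarith
  also have "\<dots> = (2 * (real k' + 1 - real i) + B1 / c * 1) / real M"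
    by (simp add: add_divide_distrib)
  also have "\<dots> \<le> (2 * (real k' + 1 - real i) + B1 / c * (real k' + 1 - real i)) / real M"
    using i B_nonneg c_pos M_pos by (intro divide_right_mono add_left_mono mult_left_mono) auto
  also have "\<dots> = contact_dist_const * (real k' + 1 - real i) / real M"
    unfolding contact_dist_const_def by (simp add: algebra_simps)
  finally have "\<bar>Y - xx i\<bar> + e \<le> contact_dist_const * (real k' + 1 - real i) / real M" .
  then have "(\<bar>Y - xx i\<bar> + e)\<^sup>2 \<le> (contact_dist_const * (real k' + 1 - real i) / real M)\<^sup>2"
    using e by (intro power_mono) auto
  then have "contact_err Y e i
      \<le> contact_const * (2 ^ (i - 1) * h) * (contact_dist_const * (real k' + 1 - real i) / real M)\<^sup>2"
    unfolding contact_err_def using contact_const_nonneg d0_pos by (intro mult_left_mono) auto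
  then show ?thesis by (simp add: power_divide power_mult_distrib mult_ac)
qed

lemma contact_err_sum_le:
  assumes k: "k < m" "k' = min (Suc k) (m - 1)" and X: "xx k \<le> X" "X \<le> xx (Suc k)"
    and e: "0 \<le> e" and Y: "\<bar>Y - X\<bar> + e \<le> B1 / (c * real M)"
  shows "(\<Sum>i\<in>{1..k'}. contact_err Y e i)
           \<le> contact_const * h * contact_dist_const\<^sup>2 / (real M)\<^sup>2 * (6 * 2 ^ k')"
proof -
  let ?D = "contact_const * h * contact_dist_const\<^sup>2 / (real M)\<^sup>2"
  have "k \<le> k'" "k' \<le> Suc k" using k by auto
  then have "(\<Sum>i\<in>{1..k'}. contact_err Y e i)
      \<le> ?D * (\<Sum>i\<in>{1..k'}. 2 ^ (i - 1) * (real k' + 1 - real i)\<^sup>2)"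
    unfolding sum_distrib_left using contact_err_le X e Y by (intro sum_mono) blast
  also have "\<dots> \<le> ?D * (6 * 2 ^ k')"
  proof (rule mult_left_mono)
    have "0 \<le> real k' ^ 2" by simp
    then show "(\<Sum>i\<in>{1..k'}. 2 ^ (i - 1) * (real k' + 1 - real i)\<^sup>2) \<le> 6 * (2::real) ^ k'"
      unfolding sum_pow2_weighted_squares by linarith
  qed (use contact_const_nonneg d0_pos in simp)
  finally show ?thesis .
qed

section \<open>Covering F_M by boxes\<close>

lemma strip_index_exists:
  assumes X: "4 * log 2 (real M) / real M \<le> X" "X \<le> 1"
  obtains k where "k < m" "xx k \<le> X" "X \<le> xx (Suc k)" "real M ^ 2 \<le> 2 * 2 ^ k"
proof -
  have xx: "xx i = 0 + real i * (2 / real M)" for i by (simp add: xpt_eq)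
  have "0 \<le> 4 * log 2 (real M) / real M" using M_ge by simp
  then have "0 \<le> X" using X(1) by linarith
  moreover have "X \<le> 0 + real m * (2 / real M)" using X(2) M_pos real_M_eq by simp
  ultimately obtain k where k: "k < m" "xx k \<le> X" "X \<le> xx (Suc k)"
    unfolding xx using grid_cell_exists[of "2 / real M" m 0 X] M_pos m_ge by auto
  have "4 * log 2 (real M) / real M \<le> 2 * real (Suc k) / real M" using X(1) k(3) by (simp add: xpt_eq)
  then have "2 * log 2 (real M) \<le> real (Suc k)" using M_pos by (simp add: divide_right_mono_neg field_simps)
  then have "(2::real) powr (2 * log 2 (real M)) \<le> 2 powr real (Suc k)" by (rule powr_mono) simp
  moreover have "(2::real) powr (2 * log 2 (real M)) = 2 powr log 2 (real M) * 2 powr log 2 (real M)"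
    by (simp add: powr_add[symmetric])
  moreover have "\<dots> = real M ^ 2" using M_pos by (simp add: power2_eq_square)
  moreover have "(2::real) powr real (Suc k) = 2 * 2 ^ k" by (subst powr_realpow) auto
  ultimately show ?thesis using k that by auto
qed

definition block_level :: "nat \<Rightarrow> nat" where "block_level k = min (Suc k) (m - 1)"

definition block_dev :: "nat \<Rightarrow> real" where
  "block_dev k' = h * B0 + contact_const * h * contact_dist_const\<^sup>2 / (real M)\<^sup>2 * (6 * 2 ^ k')"

definition moved_piece :: "nat \<Rightarrow> (real \<times> real) set" where
  "moved_piece n = (\<lambda>p. p + (ut n, vt n)) ` Tpiece f a0 d0 M n"

lemma block_level_bounds: "k < m \<Longrightarrow> 1 \<le> block_level k \<and> block_level k < m \<and> k \<le> block_level k"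
  using m_ge by (auto simp: block_level_def)

lemma moved_piece_deviation:
  assumes p: "p \<in> moved_piece n" and n: "n < 2 ^ M" and k: "k < m"
    and X: "xx k \<le> fst p" "fst p \<le> xx (Suc k)" "fst p \<le> 1"
  defines "g \<equiv> n - n mod 2 ^ block_level k"
  shows "fst p - ut g \<in> {0..1}"
    "\<bar>snd p - (A g * f (fst p - ut g) + vt g)\<bar> \<le> block_dev (block_level k)"
proof -
  obtain x a where x: "0 \<le> x" "x \<le> 1" and a: "A n \<le> a" "a \<le> A n + h"
    and p_eq: "p = (x + ut n, a * f x + vt n)"
    using p unfolding moved_piece_def Tpiece_def by auto
  note lvl = block_level_bounds[OF k]
  note dev = piece_deviation[OF n _ _ x a, of "block_level k", folded g_def]
  show "fst p - ut g \<in> {0..1}" using dev lvl X p_eq by auto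
  have g: "g < 2 ^ M" using n by (simp add: g_def)
  have "(\<Sum>i\<in>{1..block_level k}. contact_err (x + ut n - ut g) (utot_upto (block_level k) n) i)
          \<le> contact_const * h * contact_dist_const\<^sup>2 / (real M)\<^sup>2 * (6 * 2 ^ block_level k)"
  proof (rule contact_err_sum_le[OF k block_level_def])
    show "xx k \<le> x + ut n" "x + ut n \<le> xx (Suc k)" using X p_eq by auto
    show "0 \<le> utot_upto (block_level k) n" using utot_upto_nonneg lvl n by blast
    have "ut n = utot_upto (block_level k) n + ut g"
      unfolding g_def using utot_vtot_split(1) lvl by blast
    then show "\<bar>x + ut n - ut g - (x + ut n)\<bar> + utot_upto (block_level k) n \<le> B1 / (c * real M)"
      using utot_nonneg[OF g] utot_le[OF n] by simp
  qed
  then show "\<bar>snd p - (A g * f (fst p - ut g) + vt g)\<bar> \<le> block_dev (block_level k)"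
    using dev(3) lvl X p_eq unfolding block_dev_def by simp
qed

text \<open>The columns are so narrow that the slope of f costs only 2 B1 col_width in the height of
  a box, which is negligible even after multiplication by the number 2^M of pieces.\<close>
definition n_cols :: nat where "n_cols = nat \<lceil>2 ^ (M + 2) * (B1 + 1) * real M / d0\<rceil> + 1"

definition col_width :: real where "col_width = 2 / (real M * real n_cols)"

definition box_radius :: "nat \<Rightarrow> real" where
  "box_radius k = 2 * block_dev (block_level k) + 2 * B1 * col_width"

definition cell :: "nat \<Rightarrow> nat \<Rightarrow> nat \<Rightarrow> (real \<times> real) set" where
  "cell k s G = {p. \<exists>n<2 ^ M. n div 2 ^ block_level k = G \<and> p \<in> moved_piece n \<and>
     xx k + real s * col_width \<le> fst p \<and> fst p \<le> xx k + real (Suc s) * col_width \<and> fst p \<le> 1}"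

definition cell_box :: "nat \<times> nat \<times> nat \<Rightarrow> (real \<times> real) set" where
  "cell_box = (\<lambda>(k, s, G). let y = snd (SOME p. p \<in> cell k s G) in
     cbox (xx k + real s * col_width, y - box_radius k) (xx k + real (Suc s) * col_width, y + box_radius k))"

definition strips :: "nat set" where "strips = {k. k < m \<and> real M ^ 2 \<le> 2 * 2 ^ k}"

definition cells :: "(nat \<times> nat \<times> nat) set" where
  "cells = Sigma strips (\<lambda>k. {..<n_cols} \<times> {..<2 ^ (M - block_level k)})"

lemma n_cols_pos: "0 < n_cols" by (simp add: n_cols_def)

lemma col_width_pos: "0 < col_width"
  unfolding col_width_def using n_cols_pos M_ge by simp

lemma n_cols_col_width: "real n_cols * col_width = 2 / real M"
  unfolding col_width_def using n_cols_pos M_ge by simp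

lemma xpt_Suc: "xx (Suc k) = xx k + real n_cols * col_width"
  using n_cols_col_width by (simp add: xpt_eq add_divide_distrib)

lemma cell_points_close:
  assumes k: "k < m" and p: "p \<in> cell k s G" and q: "q \<in> cell k s G" and s: "s < n_cols"
  shows "\<bar>snd p - snd q\<bar> \<le> box_radius k"
proof -
  have strip: "xx k \<le> fst r" "fst r \<le> xx (Suc k)" if "r \<in> cell k s G" for r
  proof -
    have "real (Suc s) * col_width \<le> real n_cols * col_width"
      using s col_width_pos by (intro mult_right_mono) auto
    moreover have "0 \<le> real s * col_width" using col_width_pos by simp
    moreover have "xx k + real s * col_width \<le> fst r" "fst r \<le> xx k + real (Suc s) * col_width"
      using that unfolding cell_def by auto
    ultimately show "xx k \<le> fst r" "fst r \<le> xx (Suc k)" unfolding xpt_Suc by linarith+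
  qed
  obtain n where n: "n < 2 ^ M" "n div 2 ^ block_level k = G" "p \<in> moved_piece n" "fst p \<le> 1"
    using p unfolding cell_def by blast
  obtain n' where n': "n' < 2 ^ M" "n' div 2 ^ block_level k = G" "q \<in> moved_piece n'" "fst q \<le> 1"
    using q unfolding cell_def by blast
  define g where "g = n - n mod 2 ^ block_level k"
  have g': "n' - n' mod 2 ^ block_level k = g" using n n' by (simp add: g_def minus_mod_eq_mult_div)
  note dev_p = moved_piece_deviation[OF n(3) n(1) k strip[OF p] n(4), folded g_def]
  note dev_q = moved_piece_deviation[OF n'(3) n'(1) k strip[OF q] n'(4), unfolded g']
  have "g < 2 ^ M" using n(1) by (simp add: g_def)
  then have A_g: "0 \<le> A g" "A g \<le> 2" using aseq_bounds[of g] h_pos by auto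
  have "\<bar>fst p - fst q\<bar> \<le> col_width" using p q unfolding cell_def by (auto simp: algebra_simps)
  then have "B1 * \<bar>fst p - fst q\<bar> \<le> B1 * col_width" using B_nonneg(2) by (rule mult_left_mono)
  then have "\<bar>f (fst p - ut g) - f (fst q - ut g)\<bar> \<le> B1 * col_width"
    using f_lipschitz[of "fst p - ut g" "fst q - ut g"] dev_p(1) dev_q(1) by simp
  then have "\<bar>A g * f (fst p - ut g) - A g * f (fst q - ut g)\<bar> \<le> 2 * (B1 * col_width)"
    using A_g by (simp add: abs_mult right_diff_distrib[symmetric] mult_mono)
  then show ?thesis using dev_p(2) dev_q(2) unfolding box_radius_def by linarith
qed

lemma FM_subset_cell_boxes: "FM f f1 a0 d0 M \<subseteq> (\<Union>i\<in>cells. cell_box i)"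
proof
  fix p assume "p \<in> FM f f1 a0 d0 M"
  then have "p \<in> (\<Union>n\<in>{0..<2 ^ M}. moved_piece n)"
    and X: "4 * log 2 (real M) / real M \<le> fst p" "fst p \<le> 1"
    unfolding FM_def moved_piece_def by auto
  then obtain n where n: "n < 2 ^ M" "p \<in> moved_piece n" by auto
  obtain k where k: "k < m" "xx k \<le> fst p" "fst p \<le> xx (Suc k)" "real M ^ 2 \<le> 2 * 2 ^ k"
    using strip_index_exists[OF X] .
  obtain s where s: "s < n_cols" "xx k + real s * col_width \<le> fst p" "fst p \<le> xx k + real (Suc s) * col_width"
    using grid_cell_exists[OF col_width_pos n_cols_pos k(2)] k(3) unfolding xpt_Suc by blast
  define G where "G = n div 2 ^ block_level k"
  have "block_level k \<le> M" using block_level_bounds[OF k(1)] by linarith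
  then have "n < 2 ^ block_level k * 2 ^ (M - block_level k)" using n(1) by (simp flip: power_add)
  then have "G < 2 ^ (M - block_level k)" unfolding G_def by (simp add: div_less_iff_less_mult mult.commute)
  then have cell: "(k, s, G) \<in> cells" using k s by (simp add: cells_def strips_def)
  have p: "p \<in> cell k s G" unfolding cell_def G_def using n s X by blast
  then have q: "(SOME p. p \<in> cell k s G) \<in> cell k s G" by (rule someI)
  have "\<bar>snd p - snd (SOME p. p \<in> cell k s G)\<bar> \<le> box_radius k"
    by (rule cell_points_close[OF k(1) p q s(1)])
  then have "p \<in> cell_box (k, s, G)" using s
    by (cases p) (auto simp: cell_box_def Let_def cbox_Pair_iff abs_le_iff)
  then show "p \<in> (\<Union>i\<in>cells. cell_box i)" using cell by blast
qed

lemma measure_cell_box: "measure lebesgue (cell_box (k, s, G)) = col_width * (2 * box_radius k)"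
proof -
  have "0 \<le> block_dev k'" for k' unfolding block_dev_def using B_nonneg d0_pos contact_const_nonneg by simp
  then have "0 \<le> box_radius k" unfolding box_radius_def using col_width_pos B_nonneg by simp
  then show ?thesis using col_width_pos
    by (simp add: cell_box_def Let_def content_Pair algebra_simps)
qed

lemma finite_strips: "finite strips"
  by (rule finite_subset[of _ "{..<m}"]) (auto simp: strips_def)

lemma sum_measure_cell_boxes:
  "(\<Sum>i\<in>cells. measure lebesgue (cell_box i))
     = (\<Sum>k\<in>strips. real n_cols * 2 ^ (M - block_level k) * (col_width * (2 * box_radius k)))"
proof -
  have "(\<Sum>i\<in>cells. measure lebesgue (cell_box i)) = (\<Sum>i\<in>cells. col_width * (2 * box_radius (fst i)))"
    by (intro sum.cong) (auto simp: measure_cell_box)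
  also have "\<dots> = (\<Sum>k\<in>strips. \<Sum>j\<in>{..<n_cols} \<times> {..<(2::nat) ^ (M - block_level k)}.
                       col_width * (2 * box_radius k))"
    unfolding cells_def using finite_strips by (subst sum.Sigma) (auto simp: case_prod_beta)
  finally show ?thesis by (simp add: card_cartesian_product)
qed

lemma block_dev_scaled_le:
  assumes k: "k \<in> strips"
  shows "2 ^ (M - block_level k) * block_dev (block_level k)
           \<le> (2 * B0 + 6 * contact_const * contact_dist_const\<^sup>2) * d0 / (real M)\<^sup>2"
proof -
  define k' where "k' = block_level k"
  have kk: "k \<le> k'" "k' \<le> M" using k block_level_bounds[of k] by (auto simp: strips_def k'_def)
  then have P: "(2::real) ^ (M - k') * 2 ^ k' = 2 ^ M" by (simp flip: power_add)
  have pow: "(2::real) ^ k \<le> 2 ^ k'" using kk by (intro power_increasing) auto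
  have "real M ^ 2 \<le> 2 * 2 ^ k" using k by (simp add: strips_def)
  with pow have M2: "real M ^ 2 \<le> 2 * 2 ^ k'" by linarith
  have "2 ^ (M - k') * (h * B0) = d0 * B0 / 2 ^ k'" using P by (simp add: field_simps)
  also have "\<dots> \<le> d0 * B0 / (real M ^ 2 / 2)"
    using M2 M_pos d0_pos B_nonneg by (intro divide_left_mono) auto
  finally have "2 ^ (M - k') * (h * B0) \<le> 2 * B0 * d0 / (real M)\<^sup>2" by (simp add: mult_ac)
  moreover have "2 ^ (M - k') * (contact_const * h * contact_dist_const\<^sup>2 / (real M)\<^sup>2 * (6 * 2 ^ k'))
      = (2 ^ (M - k') * 2 ^ k') * h * (6 * contact_const * contact_dist_const\<^sup>2 / (real M)\<^sup>2)"
    by (simp add: algebra_simps)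
  moreover have "\<dots> = 6 * contact_const * contact_dist_const\<^sup>2 * d0 / (real M)\<^sup>2" unfolding P by simp
  ultimately show ?thesis unfolding k'_def[symmetric] block_dev_def
    by (simp add: distrib_left add_divide_distrib algebra_simps)
qed

lemma col_width_scaled_le: "2 ^ (M - k') * (2 * B1 * col_width) \<le> d0 / (real M)\<^sup>2"
proof -
  define Z where "Z = (2::real) ^ (M + 2) * (B1 + 1)"
  have Z_pos: "0 < Z" using B_nonneg by (simp add: Z_def)
  have "Z * real M / d0 \<le> real n_cols"
    using real_nat_ceiling_ge[of "Z * real M / d0"] unfolding n_cols_def Z_def by simp
  have "2 ^ (M - k') * (2 * B1 * col_width) \<le> 2 ^ M * (2 * B1 * col_width)"
    using B_nonneg col_width_pos by (intro mult_right_mono power_increasing) auto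
  also have "\<dots> \<le> Z / (real M * real n_cols)"
    unfolding col_width_def Z_def using M_pos n_cols_pos
    by (simp add: power_add divide_right_mono field_simps)
  also have "\<dots> \<le> Z / (real M * (Z * real M / d0))"
    using \<open>Z * real M / d0 \<le> real n_cols\<close> M_pos d0_pos Z_pos n_cols_pos
    by (intro divide_left_mono mult_left_mono mult_pos_pos) auto
  also have "\<dots> = d0 / (real M)\<^sup>2"
    using Z_pos M_pos d0_pos by (simp add: field_simps power2_eq_square)
  finally show ?thesis .
qed

lemma strip_area_le:
  assumes k: "k \<in> strips"
  shows "real n_cols * 2 ^ (M - block_level k) * (col_width * (2 * box_radius k))
           \<le> 4 / real M * (area_const * d0 / (real M)\<^sup>2)"
proof -
  let ?T = "(2::real) ^ (M - block_level k)"
  have "?T * box_radius k = 2 * (?T * block_dev (block_level k)) + ?T * (2 * B1 * col_width)"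
    unfolding box_radius_def by (simp add: algebra_simps)
  also have "\<dots> \<le> 2 * ((2 * B0 + 6 * contact_const * contact_dist_const\<^sup>2) * d0 / (real M)\<^sup>2)
                    + d0 / (real M)\<^sup>2"
    using block_dev_scaled_le[OF k] col_width_scaled_le[of "block_level k"] by linarith
  also have "\<dots> = area_const * d0 / (real M)\<^sup>2"
    unfolding area_const_def using M_pos by (simp add: field_simps)
  finally have bound: "?T * box_radius k \<le> area_const * d0 / (real M)\<^sup>2" .
  have "real n_cols * ?T * (col_width * (2 * box_radius k))
      = (real n_cols * col_width) * 2 * (?T * box_radius k)" by (simp add: algebra_simps)
  also have "\<dots> = 4 / real M * (?T * box_radius k)" unfolding n_cols_col_width by simp
  also have "\<dots> \<le> 4 / real M * (area_const * d0 / (real M)\<^sup>2)"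
    using bound M_pos by (intro mult_left_mono) auto
  finally show ?thesis .
qed

lemma FM_measure_le: "measure lebesgue (FM f f1 a0 d0 M) \<le> 2 * area_const * d0 / (real M)\<^sup>2"
proof -
  have boxes: "(\<Union>i\<in>cells. cell_box i) \<in> fmeasurable lebesgue"
    using finite_strips by (intro fmeasurable.finite_UN) (auto simp: cells_def cell_box_def Let_def)
  have "card strips \<le> m" using card_mono[of "{..<m}" strips] by (auto simp: strips_def)
  then have card: "real (card strips) \<le> real m" by simp
  have "measure lebesgue (\<Union>i\<in>cells. cell_box i) \<le> (\<Sum>i\<in>cells. measure lebesgue (cell_box i))"
    using finite_strips by (intro measure_UNION_le) (auto simp: cells_def cell_box_def Let_def)
  also have "\<dots> \<le> (\<Sum>k\<in>strips. 4 / real M * (area_const * d0 / (real M)\<^sup>2))"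
    unfolding sum_measure_cell_boxes by (intro sum_mono strip_area_le)
  also have "\<dots> \<le> real m * (4 / real M * (area_const * d0 / (real M)\<^sup>2))"
    using mult_right_mono[OF card, of "4 / real M * (area_const * d0 / (real M)\<^sup>2)"] area_const_pos d0_pos M_pos
    by simp
  also have "\<dots> = 2 * area_const * d0 / (real M)\<^sup>2" using M_pos real_M_eq by (simp add: field_simps)
  finally have bound: "measure lebesgue (\<Union>i\<in>cells. cell_box i) \<le> 2 * area_const * d0 / (real M)\<^sup>2" .
  show ?thesis
  proof (cases "FM f f1 a0 d0 M \<in> sets lebesgue")
    case True
    then show ?thesis
      using measure_mono_fmeasurable[OF FM_subset_cell_boxes True boxes] bound by linarith
  next
    case False
    then show ?thesis using measure_notin_sets[OF False] area_const_pos d0_pos by simp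
  qed
qed

end

context cut_slide_profile
begin

lemma M_large_if_ge:
  assumes M: "2 * nat \<lceil>B1 / c\<rceil> + 8 \<le> M" "even M"
  shows "B1 * real M \<le> 2 * c * 2 ^ (M div 2)"
proof -
  let ?m = "M div 2"
  have m: "B1 / c \<le> real ?m" "4 \<le> ?m" using M by linarith+
  have "B1 * real M = 2 * c * (B1 / c * real ?m)"
    using c_pos M(2) by (simp add: real_of_nat_div field_simps)
  also have "\<dots> \<le> 2 * c * (real ?m * real ?m)"
    using m B_nonneg c_pos by (intro mult_left_mono mult_right_mono) auto
  also have "\<dots> \<le> 2 * c * 2 ^ ?m"
    using square_le_power2[OF m(2)] c_pos
    by (intro mult_left_mono) (auto simp: power2_eq_square simp flip: of_nat_mult)
  finally show ?thesis .
qed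

lemma FM_measure_eventually_le:
  "\<exists>C M0. \<forall>M::nat. M \<ge> M0 \<and> 4 dvd M \<longrightarrow>
     (\<forall>a0 d0::real. 1 \<le> a0 \<and> a0 \<le> 2 \<and> 0 < d0 \<and> d0 \<le> 2 - a0 \<longrightarrow>
        measure lebesgue (FM f f1 a0 d0 M) \<le> C * d0 / (real M)\<^sup>2)"
proof (intro exI allI impI)
  fix M :: nat and a0 d0 :: real
  assume M: "2 * nat \<lceil>B1 / c\<rceil> + 8 \<le> M \<and> 4 dvd M"
    and a0_d0: "1 \<le> a0 \<and> a0 \<le> 2 \<and> 0 < d0 \<and> d0 \<le> 2 - a0"
  have "even M" using M by (auto intro: dvd_trans[of 2 4])
  with M a0_d0 interpret cut_slide f f1 f2 f3 c B0 B1 B2 B3 M a0 d0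
    by unfold_locales (auto intro: M_large_if_ge)
  show "measure lebesgue (FM f f1 a0 d0 M) \<le> 2 * area_const * d0 / (real M)\<^sup>2"
    by (rule FM_measure_le)
qed

end

lemma cut_slide_profile_exists:
  fixes f f1 f2 f3 :: "real \<Rightarrow> real"
  assumes d1: "\<And>x. x \<in> {0..1} \<Longrightarrow> (f has_real_derivative f1 x) (at x within {0..1})"
      and d2: "\<And>x. x \<in> {0..1} \<Longrightarrow> (f1 has_real_derivative f2 x) (at x within {0..1})"
      and c2: "continuous_on {0..1} f2"
      and f1_0: "f1 0 \<ge> 0"
      and inf_f2: "\<exists>c>0. \<forall>x\<in>{0..1}. f2 x \<ge> c"
      and d3: "\<And>x. x \<in> {0<..<1} \<Longrightarrow> (f2 has_real_derivative f3 x) (at x)"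
      and f3_bdd: "\<exists>B. \<forall>x\<in>{0<..<1}. \<bar>f3 x\<bar> \<le> B"
  obtains c B0 B1 B2 B3 where "cut_slide_profile f f1 f2 f3 c B0 B1 B2 B3"
proof -
  have cont: "continuous_on {0..1} g"
    if "\<And>x. x \<in> {0..1} \<Longrightarrow> (g has_real_derivative g' x) (at x within {0..1})"
    for g g' :: "real \<Rightarrow> real"
    unfolding continuous_on_eq_continuous_within using DERIV_continuous that by blast
  obtain c where "c > 0" "\<forall>x\<in>{0..1}. c \<le> f2 x" using inf_f2 by blast
  moreover obtain B3 where "\<forall>x\<in>{0<..<1}. \<bar>f3 x\<bar> \<le> B3" "0 \<le> B3"
    using f3_bdd by (meson abs_ge_zero order_trans)
  moreover obtain B0 where "0 \<le> B0" "\<And>x. x \<in> {0..1} \<Longrightarrow> norm (f x) \<le> B0"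
    using continuous_on_compact_bound[OF compact_Icc cont[OF d1]] by blast
  moreover obtain B1 where "0 \<le> B1" "\<And>x. x \<in> {0..1} \<Longrightarrow> norm (f1 x) \<le> B1"
    using continuous_on_compact_bound[OF compact_Icc cont[OF d2]] by blast
  moreover obtain B2 where "0 \<le> B2" "\<And>x. x \<in> {0..1} \<Longrightarrow> norm (f2 x) \<le> B2"
    using continuous_on_compact_bound[OF compact_Icc c2] by blast
  ultimately have "cut_slide_profile f f1 f2 f3 c B0 B1 B2 B3"
    using d1 d2 c2 f1_0 d3 by unfold_locales auto
  then show ?thesis by (rule that)
qed

theorem theorem2p3:
  fixes f f1 f2 f3 :: "real \<Rightarrow> real"
  assumes d1: "\<And>x. x \<in> {0..1} \<Longrightarrow> (f has_real_derivative f1 x) (at x within {0..1})"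
      and d2: "\<And>x. x \<in> {0..1} \<Longrightarrow> (f1 has_real_derivative f2 x) (at x within {0..1})"
      and c2: "continuous_on {0..1} f2"
      and f1_0: "f1 0 \<ge> 0"
      and inf_f2: "\<exists>c>0. \<forall>x\<in>{0..1}. f2 x \<ge> c"
      and d3: "\<And>x. x \<in> {0<..<1} \<Longrightarrow> (f2 has_real_derivative f3 x) (at x)"
      and f3_bdd: "\<exists>B. \<forall>x\<in>{0<..<1}. \<bar>f3 x\<bar> \<le> B"
      and cond: "\<And>x. x \<in> {0<..<1} \<Longrightarrow> f1 x * f3 x - (f2 x)\<^sup>2 \<le> 0"
  shows "\<exists>C. \<exists>M0. \<forall>M::nat. M \<ge> M0 \<and> 4 dvd M \<longrightarrow>
           (\<forall>a0 d0::real. 1 \<le> a0 \<and> a0 \<le> 2 \<and> 0 < d0 \<and> d0 \<le> 2 - a0 \<longrightarrow>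
              measure lebesgue (FM f f1 a0 d0 M) \<le> C * d0 / (real M)\<^sup>2)"
proof -
  obtain c B0 B1 B2 B3 where "cut_slide_profile f f1 f2 f3 c B0 B1 B2 B3"
    using cut_slide_profile_exists[OF d1 d2 c2 f1_0 inf_f2 d3 f3_bdd] .
  then show ?thesis by (rule cut_slide_profile.FM_measure_eventually_le)
qed

end
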